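(* Let $\xi$ and $\chi$ be $\mu$-calculus formulas such that $\xi$ is free for $x$ in $\chi$, $x\in\mathrm{FV}(\chi)$, $|\xi|>1$, and $\chi[\xi/x]$ is tidy. Then there are a tidy formula $\chi'$ and a variable $x'$ such that $\xi$ is free for $x'$ in $\chi'$, $\chi'[\xi/x']=\chi[\xi/x]$, $|\chi'|\le|\chi|$, $\mathit{ad}_\eta(\chi')\le\mathit{ad}_\eta(\chi)$ for both $\eta\in\{\mu,\nu\}$, and $\xi\not\trianglelefteq_f\chi'$.
   Context: Syntax. Formulas of the modal $\mu$-calculus are taken in negation normal form: $\phi ::= \top \mid \bot \mid p \mid \neg p \mid x \mid \phi\land\phi\mid\phi\lor\phi\mid\Diamond\phi\mid\Box\phi\mid\mu x.\phi\mid\nu x.\phi$, where $p$ ranges over proposition letters and $x$ over an infinite supply of variables (which occur only positively). The formulas $\top,\bot,p,\neg p,x$ are atomic. $\mathrm{FV}(\phi)$ and $\mathrm{BV}(\phi)$ are the sets of free and bound variables of $\phi$; $\phi$ is tidy if $\mathrm{FV}(\phi)\cap\mathrm{BV}(\phi)=\varnothing$. $\bar\eta$ denotes the fixpoint operator other than $\eta\in\{\mu,\nu\}$. $\chi[\xi/x]$ is the result of replacing every free occurrence of $x$ in $\chi$ by $\xi$; $\xi$ is free for $x$ in $\chi$ if no free variable of $\xi$ becomes bound in $\chi[\xi/x]$. $|\phi|$ is the length of $\phi$ (number of nodes of its syntax tree). Free subformulas. $\phi\trianglelefteq_f\psi$ iff $\psi=\chi[\phi/y]$ for some formula $\chi$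 and variable $y$ with $y\in\mathrm{FV}(\chi)$ and $\phi$ free for $y$ in $\chi$. Alternation hierarchy. The classes $\mathrm{AH}_\eta(n)$ ($\eta\in\{\mu,\nu\}$, $n\in\omega$) are the least classes such that: (1) all atomic formulas belong to $\mathrm{AH}_\eta(0)$; (2) each $\mathrm{AH}_\eta(n)$ is closed under $\land,\lor,\Diamond,\Box$; (3) if $\chi\in\mathrm{AH}_\eta(n)$ then $\bar\eta x.\chi\in\mathrm{AH}_\eta(n)$; (4) if $\chi,\xi\in\mathrm{AH}_\eta(n)$ and $\xi$ is free for $x$ in $\chi$ then $\chi[\xi/x]\in\mathrm{AH}_\eta(n)$; (5) $\mathrm{AH}_\mu(n)\cup\mathrm{AH}_\nu(n)\subseteq\mathrm{AH}_\eta(n+1)$. $\mathit{ad}_\eta(\xi)$ is the least $k$ with $\xi\in\mathrm{AH}_\eta(k)$. *)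

theory Defs
  imports Main
begin

text \<open>Modal mu-calculus formulas in negation normal form; proposition letters of type 'p,
  variables drawn from the infinite supply nat.\<close>

datatype 'p fm =
    Top | Bot | Prop 'p | NProp 'p | Var nat
  | And "'p fm" "'p fm" | Or "'p fm" "'p fm"
  | Dia "'p fm" | Box "'p fm"
  | Mu nat "'p fm" | Nu nat "'p fm"

datatype fp = MuOp | NuOp

fun dual :: "fp \<Rightarrow> fp" where
  "dual MuOp = NuOp" | "dual NuOp = MuOp"

fun fpbind :: "fp \<Rightarrow> nat \<Rightarrow> 'p fm \<Rightarrow> 'p fm" where
  "fpbind MuOp x f = Mu x f" | "fpbind NuOp x f = Nu x f"

fun atomic :: "'p fm \<Rightarrow> bool" where
  "atomic Top = True" | "atomic Bot = True" | "atomic (Prop p) = True"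
| "atomic (NProp p) = True" | "atomic (Var x) = True" | "atomic _ = False"

fun FV :: "'p fm \<Rightarrow> nat set" where
  "FV Top = {}" | "FV Bot = {}" | "FV (Prop p) = {}" | "FV (NProp p) = {}"
| "FV (Var x) = {x}"
| "FV (And a b) = FV a \<union> FV b" | "FV (Or a b) = FV a \<union> FV b"
| "FV (Dia a) = FV a" | "FV (Box a) = FV a"
| "FV (Mu x a) = FV a - {x}" | "FV (Nu x a) = FV a - {x}"

fun BV :: "'p fm \<Rightarrow> nat set" where
  "BV Top = {}" | "BV Bot = {}" | "BV (Prop p) = {}" | "BV (NProp p) = {}"
| "BV (Var x) = {}"
| "BV (And a b) = BV a \<union> BV b" | "BV (Or a b) = BV a \<union> BV b"
| "BV (Dia a) = BV a" | "BV (Box a) = BV a"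
| "BV (Mu x a) = insert x (BV a)" | "BV (Nu x a) = insert x (BV a)"

definition tidy :: "'p fm \<Rightarrow> bool" where
  "tidy f \<longleftrightarrow> FV f \<inter> BV f = {}"

text \<open>subst c x e = c[e/x]: replace every free occurrence of x in c by e (no renaming).\<close>
fun subst :: "'p fm \<Rightarrow> nat \<Rightarrow> 'p fm \<Rightarrow> 'p fm" where
  "subst Top x e = Top" | "subst Bot x e = Bot" | "subst (Prop p) x e = Prop p"
| "subst (NProp p) x e = NProp p"
| "subst (Var y) x e = (if y = x then e else Var y)"
| "subst (And a b) x e = And (subst a x e) (subst b x e)"
| "subst (Or a b) x e = Or (subst a x e) (subst b x e)"
| "subst (Dia a) x e = Dia (subst a x e)"
| "subst (Box a) x e = Box (subst a x e)"
| "subst (Mu y a) x e = (if y = x then Mu y a else Mu y (subst a x e))"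
| "subst (Nu y a) x e = (if y = x then Nu y a else Nu y (subst a x e))"

text \<open>freefor e x c: no free variable of e becomes bound in c[e/x], i.e. no free occurrence
  of x in c lies in the scope of a fpbind for a free variable of e.\<close>
fun freefor :: "'p fm \<Rightarrow> nat \<Rightarrow> 'p fm \<Rightarrow> bool" where
  "freefor e x Top = True" | "freefor e x Bot = True" | "freefor e x (Prop p) = True"
| "freefor e x (NProp p) = True" | "freefor e x (Var y) = True"
| "freefor e x (And a b) = (freefor e x a \<and> freefor e x b)"
| "freefor e x (Or a b) = (freefor e x a \<and> freefor e x b)"
| "freefor e x (Dia a) = freefor e x a"
| "freefor e x (Box a) = freefor e x a"
| "freefor e x (Mu y a) = (x \<notin> FV (Mu y a) \<or> (y \<notin> FV e \<and> freefor e x a))"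
| "freefor e x (Nu y a) = (x \<notin> FV (Nu y a) \<or> (y \<notin> FV e \<and> freefor e x a))"

fun len :: "'p fm \<Rightarrow> nat" where
  "len Top = 1" | "len Bot = 1" | "len (Prop p) = 1" | "len (NProp p) = 1" | "len (Var x) = 1"
| "len (And a b) = 1 + len a + len b" | "len (Or a b) = 1 + len a + len b"
| "len (Dia a) = 1 + len a" | "len (Box a) = 1 + len a"
| "len (Mu x a) = 1 + len a" | "len (Nu x a) = 1 + len a"

definition free_sub :: "'p fm \<Rightarrow> 'p fm \<Rightarrow> bool" where
  "free_sub f g \<longleftrightarrow> (\<exists>c y. g = subst c y f \<and> y \<in> FV c \<and> freefor f y c)"

inductive AH :: "fp \<Rightarrow> nat \<Rightarrow> 'p fm \<Rightarrow> bool" where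
  atom: "atomic f \<Longrightarrow> AH eta 0 f"
| conj: "AH eta n a \<Longrightarrow> AH eta n b \<Longrightarrow> AH eta n (And a b)"
| disj: "AH eta n a \<Longrightarrow> AH eta n b \<Longrightarrow> AH eta n (Or a b)"
| dia: "AH eta n a \<Longrightarrow> AH eta n (Dia a)"
| box: "AH eta n a \<Longrightarrow> AH eta n (Box a)"
| fix_dual: "AH eta n c \<Longrightarrow> AH eta n (fpbind (dual eta) x c)"
| sub: "AH eta n c \<Longrightarrow> AH eta n e \<Longrightarrow> freefor e x c \<Longrightarrow> AH eta n (subst c x e)"
| up: "AH eta' n f \<Longrightarrow> AH eta (Suc n) f"

definition ad :: "fp \<Rightarrow> 'p fm \<Rightarrow> nat" where
  "ad eta f = (LEAST k. AH eta k f)"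

end

theory Submission
  imports Defs
begin

text \<open>Take a variable z that occurs neither in \<phi> = \<chi>[\<xi>/x] nor free in \<xi>, and let \<chi>' be \<phi> with
  every maximal occurrence of \<xi> replaced by z. Then \<chi>'[\<xi>/z] = \<phi>, and \<xi> does not occur in \<chi>' at
  all: since |\<xi>| > 1, an occurrence of \<xi> could only be recreated by abstraction if it contained z.
  As the substituted copies of \<xi> are among the occurrences of \<xi> in \<phi>, \<chi>' also arises from \<chi> by
  repeatedly replacing a subformula by the variable z, which is not bound in \<chi>. Such pruning cannot
  increase the length, and it preserves membership in each class AH \<eta> n. The latter is shown by
  induction on the derivation of membership; the only real case is a substitution c[e/y], where
  the pruned position lies either in c or inside one copy of e. In the second case a fresh
  variable u singles out that copy, which exhibits the pruned formula as c'[e/y][e'/u] with c' and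
  e' pruned.\<close>

lemma finite_FV [simp]: "finite (FV f)"
  by (induction f) auto

lemma finite_BV [simp]: "finite (BV f)"
  by (induction f) auto

lemma subst_not_free: "x \<notin> FV c \<Longrightarrow> subst c x e = c"
  by (induction c) auto

lemma freefor_not_free: "x \<notin> FV c \<Longrightarrow> freefor e x c"
  by (induction c) auto

lemma freefor_if_disjoint: "FV e \<inter> BV c = {} \<Longrightarrow> freefor e x c"
  by (induction c) auto

lemma FV_subst_subset: "FV (subst c x e) \<subseteq> FV c \<union> FV e"
  by (induction c) auto

lemma FV_subst_supset: "x \<in> FV c \<Longrightarrow> freefor e x c \<Longrightarrow> FV e \<subseteq> FV (subst c x e)"
  by (induction c) auto

lemma BV_subst_supset: "BV c \<subseteq> BV (subst c x e)"
  and BV_subst_supset_arg: "x \<in> FV c \<Longrightarrow> BV e \<subseteq> BV (subst c x e)"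
  by (induction c) auto

section \<open>Pruning\<close>

inductive prune_step :: "nat \<Rightarrow> 'p fm \<Rightarrow> 'p fm \<Rightarrow> bool" for z where
  here: "prune_step z f (Var z)"
| andL: "prune_step z a a' \<Longrightarrow> prune_step z (And a b) (And a' b)"
| andR: "prune_step z b b' \<Longrightarrow> prune_step z (And a b) (And a b')"
| orL: "prune_step z a a' \<Longrightarrow> prune_step z (Or a b) (Or a' b)"
| orR: "prune_step z b b' \<Longrightarrow> prune_step z (Or a b) (Or a b')"
| dia: "prune_step z a a' \<Longrightarrow> prune_step z (Dia a) (Dia a')"
| box: "prune_step z a a' \<Longrightarrow> prune_step z (Box a) (Box a')"
| mu: "prune_step z a a' \<Longrightarrow> prune_step z (Mu x a) (Mu x a')"
| nu: "prune_step z a a' \<Longrightarrow> prune_step z (Nu x a) (Nu x a')"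

lemma prune_step_FV: "prune_step z f g \<Longrightarrow> FV g \<subseteq> insert z (FV f)"
  by (induction rule: prune_step.induct) auto

lemma prune_step_BV: "prune_step z f g \<Longrightarrow> BV g \<subseteq> BV f"
  by (induction rule: prune_step.induct) auto

lemma len_gt_0: "0 < len f"
  by (cases f) auto

lemma prune_step_len: "prune_step z f g \<Longrightarrow> len g \<le> len f"
  by (induction rule: prune_step.induct) (auto simp: Suc_le_eq len_gt_0)

lemma prune_step_rename:
  assumes "prune_step z f g" "u \<notin> FV f" "u \<notin> BV f"
  shows "\<exists>g'. prune_step u f g' \<and> g = subst g' u (Var z)"
  using assms
proof (induction rule: prune_step.induct)
  case (here f)
  then show ?case by (auto intro: prune_step.here)
qed (fastforce simp: subst_not_free intro: prune_step.intros)+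

lemma freefor_prune_step: "prune_step u c c' \<Longrightarrow> u \<noteq> x \<Longrightarrow> freefor e x c \<Longrightarrow> freefor e x c'"
  by (induction rule: prune_step.induct) (auto dest: prune_step_FV)

text \<open>g arises from c[e/x] by pruning one position with z: either a position of c (and t = z), or a
  position inside one of the copies of e; then c' has u in place of the corresponding occurrence
  of x, and t is the pruned copy.\<close>

definition subst_split :: "nat \<Rightarrow> nat \<Rightarrow> 'p fm \<Rightarrow> nat \<Rightarrow> 'p fm \<Rightarrow> 'p fm \<Rightarrow> bool" where
  "subst_split z u c x e g \<longleftrightarrow> (\<exists>c' t. prune_step u c c' \<and> (t = Var z \<or> prune_step z e t)
     \<and> freefor t u (subst c' x e) \<and> g = subst (subst c' x e) u t)"

lemma subst_split_Var: "u \<noteq> x \<Longrightarrow> subst_split z u c x e (Var z)"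
  unfolding subst_split_def by (intro exI[of _ "Var u"] exI[of _ "Var z"]) (auto intro: prune_step.here)

lemma subst_split_not_free:
  assumes "x \<notin> FV c" "prune_step z c g" "z \<notin> BV c" "u \<notin> FV c" "u \<notin> BV c" "u \<noteq> x"
  shows "subst_split z u c x e g"
proof -
  obtain c' where c': "prune_step u c c'" "g = subst c' u (Var z)"
    using prune_step_rename assms by blast
  have "x \<notin> FV c'" using prune_step_FV[OF c'(1)] assms by auto
  moreover have "freefor (Var z) u c'"
    by (rule freefor_if_disjoint) (use prune_step_BV[OF c'(1)] assms in auto)
  ultimately show ?thesis unfolding subst_split_def
    using c' by (intro exI[of _ c'] exI[of _ "Var z"]) (simp add: subst_not_free)
qed

lemma subst_split_cong:
  assumes "subst_split z u a x e a'"
  shows "u \<notin> FV (subst b x e) \<Longrightarrow> subst_split z u (And a b) x e (And a' (subst b x e))"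
    and "u \<notin> FV (subst b x e) \<Longrightarrow> subst_split z u (And b a) x e (And (subst b x e) a')"
    and "u \<notin> FV (subst b x e) \<Longrightarrow> subst_split z u (Or a b) x e (Or a' (subst b x e))"
    and "u \<notin> FV (subst b x e) \<Longrightarrow> subst_split z u (Or b a) x e (Or (subst b x e) a')"
    and "subst_split z u (Dia a) x e (Dia a')"
    and "subst_split z u (Box a) x e (Box a')"
    and "y \<noteq> x \<Longrightarrow> y \<notin> FV e \<Longrightarrow> y \<noteq> z \<Longrightarrow> y \<noteq> u \<Longrightarrow> subst_split z u (Mu y a) x e (Mu y a')"
    and "y \<noteq> x \<Longrightarrow> y \<notin> FV e \<Longrightarrow> y \<noteq> z \<Longrightarrow> y \<noteq> u \<Longrightarrow> subst_split z u (Nu y a) x e (Nu y a')"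
proof -
  obtain c' t where split: "prune_step u a c'" "t = Var z \<or> prune_step z e t"
      "freefor t u (subst c' x e)" "a' = subst (subst c' x e) u t"
    using assms unfolding subst_split_def by blast
  show "u \<notin> FV (subst b x e) \<Longrightarrow> subst_split z u (And a b) x e (And a' (subst b x e))"
    unfolding subst_split_def
    by (intro exI[of _ "And c' b"] exI[of _ t])
      (use split in \<open>auto intro: prune_step.intros simp: subst_not_free freefor_not_free\<close>)
  show "u \<notin> FV (subst b x e) \<Longrightarrow> subst_split z u (And b a) x e (And (subst b x e) a')"
    unfolding subst_split_def
    by (intro exI[of _ "And b c'"] exI[of _ t])
      (use split in \<open>auto intro: prune_step.intros simp: subst_not_free freefor_not_free\<close>)
  show "u \<notin> FV (subst b x e) \<Longrightarrow> subst_split z u (Or a b) x e (Or a' (subst b x e))"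
    unfolding subst_split_def
    by (intro exI[of _ "Or c' b"] exI[of _ t])
      (use split in \<open>auto intro: prune_step.intros simp: subst_not_free freefor_not_free\<close>)
  show "u \<notin> FV (subst b x e) \<Longrightarrow> subst_split z u (Or b a) x e (Or (subst b x e) a')"
    unfolding subst_split_def
    by (intro exI[of _ "Or b c'"] exI[of _ t])
      (use split in \<open>auto intro: prune_step.intros simp: subst_not_free freefor_not_free\<close>)
  show "subst_split z u (Dia a) x e (Dia a')"
    unfolding subst_split_def
    by (intro exI[of _ "Dia c'"] exI[of _ t])
      (use split in \<open>auto intro: prune_step.intros simp: subst_not_free freefor_not_free\<close>)
  show "subst_split z u (Box a) x e (Box a')"
    unfolding subst_split_def
    by (intro exI[of _ "Box c'"] exI[of _ t])
      (use split in \<open>auto intro: prune_step.intros simp: subst_not_free freefor_not_free\<close>)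
  have "FV t \<subseteq> insert z (FV e)" using split(2) by (auto dest: prune_step_FV)
  then show "y \<noteq> x \<Longrightarrow> y \<notin> FV e \<Longrightarrow> y \<noteq> z \<Longrightarrow> y \<noteq> u \<Longrightarrow> subst_split z u (Mu y a) x e (Mu y a')"
    unfolding subst_split_def
    by (intro exI[of _ "Mu y c'"] exI[of _ t]) (use split in \<open>auto intro: prune_step.intros\<close>)
  from \<open>FV t \<subseteq> insert z (FV e)\<close>
  show "y \<noteq> x \<Longrightarrow> y \<notin> FV e \<Longrightarrow> y \<noteq> z \<Longrightarrow> y \<noteq> u \<Longrightarrow> subst_split z u (Nu y a) x e (Nu y a')"
    unfolding subst_split_def
    by (intro exI[of _ "Nu y c'"] exI[of _ t]) (use split in \<open>auto intro: prune_step.intros\<close>)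
qed

lemma prune_step_subst_split:
  assumes "prune_step z (subst c x e) g" "freefor e x c" "z \<notin> BV c"
    "u \<notin> FV c" "u \<notin> BV c" "u \<notin> FV e" "u \<noteq> x" "u \<noteq> z"
  shows "subst_split z u c x e g"
  using assms
proof (induction c arbitrary: g)
  case (Var y)
  show ?case
  proof (cases "y = x")
    case True
    then show ?thesis using Var.prems unfolding subst_split_def
      by (intro exI[of _ "Var u"] exI[of _ g]) (auto intro: prune_step.here)
  next
    case False
    then show ?thesis using Var.prems by (intro subst_split_not_free) simp_all
  qed
next
  case (And a b)
  have fresh: "u \<notin> FV (subst a x e)" "u \<notin> FV (subst b x e)"
    using FV_subst_subset[of a x e] FV_subst_subset[of b x e] And.prems by auto
  from And.prems(1) have "prune_step z (And (subst a x e) (subst b x e)) g" by simp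
  then show ?case by cases (use And fresh in \<open>simp_all add: subst_split_Var subst_split_cong\<close>)
next
  case (Or a b)
  have fresh: "u \<notin> FV (subst a x e)" "u \<notin> FV (subst b x e)"
    using FV_subst_subset[of a x e] FV_subst_subset[of b x e] Or.prems by auto
  from Or.prems(1) have "prune_step z (Or (subst a x e) (subst b x e)) g" by simp
  then show ?case by cases (use Or fresh in \<open>simp_all add: subst_split_Var subst_split_cong\<close>)
next
  case (Dia a)
  from Dia.prems(1) have "prune_step z (Dia (subst a x e)) g" by simp
  then show ?case by cases (use Dia in \<open>simp_all add: subst_split_Var subst_split_cong\<close>)
next
  case (Box a)
  from Box.prems(1) have "prune_step z (Box (subst a x e)) g" by simp
  then show ?case by cases (use Box in \<open>simp_all add: subst_split_Var subst_split_cong\<close>)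
next
  case (Mu y a)
  show ?case
  proof (cases "x \<in> FV (Mu y a)")
    case True
    with Mu.prems(1) have "prune_step z (Mu y (subst a x e)) g" by auto
    then show ?thesis by cases (use Mu True in \<open>simp_all add: subst_split_Var subst_split_cong\<close>)
  qed (use Mu.prems in \<open>intro subst_split_not_free, auto simp: subst_not_free split: if_splits\<close>)
next
  case (Nu y a)
  show ?case
  proof (cases "x \<in> FV (Nu y a)")
    case True
    with Nu.prems(1) have "prune_step z (Nu y (subst a x e)) g" by auto
    then show ?thesis by cases (use Nu True in \<open>simp_all add: subst_split_Var subst_split_cong\<close>)
  qed (use Nu.prems in \<open>intro subst_split_not_free, auto simp: subst_not_free split: if_splits\<close>)
qed (intro subst_split_not_free; simp)+

abbreviation prunes :: "nat \<Rightarrow> 'p fm \<Rightarrow> 'p fm \<Rightarrow> bool" where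
  "prunes z \<equiv> (prune_step z)\<^sup>*\<^sup>*"

lemma rtranclp_lift: "(\<And>a b. r a b \<Longrightarrow> r (f a) (f b)) \<Longrightarrow> r\<^sup>*\<^sup>* a b \<Longrightarrow> r\<^sup>*\<^sup>* (f a) (f b)"
  by (erule rtranclp_induct) (auto intro: rtranclp.rtrancl_into_rtrancl)

lemma prunes_AndI: "prunes z a a' \<Longrightarrow> prunes z b b' \<Longrightarrow> prunes z (And a b) (And a' b')"
  using rtranclp_lift[where f = "\<lambda>a. And a b"] rtranclp_lift[where f = "\<lambda>b. And a' b"]
  by (meson prune_step.andL prune_step.andR rtranclp_trans)

lemma prunes_OrI: "prunes z a a' \<Longrightarrow> prunes z b b' \<Longrightarrow> prunes z (Or a b) (Or a' b')"
  using rtranclp_lift[where f = "\<lambda>a. Or a b"] rtranclp_lift[where f = "\<lambda>b. Or a' b"]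
  by (meson prune_step.orL prune_step.orR rtranclp_trans)

lemma prunes_DiaI: "prunes z a a' \<Longrightarrow> prunes z (Dia a) (Dia a')"
  and prunes_BoxI: "prunes z a a' \<Longrightarrow> prunes z (Box a) (Box a')"
  and prunes_MuI: "prunes z a a' \<Longrightarrow> prunes z (Mu x a) (Mu x a')"
  and prunes_NuI: "prunes z a a' \<Longrightarrow> prunes z (Nu x a) (Nu x a')"
  by (auto intro: rtranclp_lift prune_step.intros)

lemma prunes_BV: "prunes z f g \<Longrightarrow> BV g \<subseteq> BV f"
  by (induction rule: rtranclp_induct) (auto dest: prune_step_BV)

lemma prunes_FV: "prunes z f g \<Longrightarrow> FV g \<subseteq> insert z (FV f)"
  by (induction rule: rtranclp_induct) (auto dest: prune_step_FV)

lemma prunes_len: "prunes z f g \<Longrightarrow> len g \<le> len f"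
  by (induction rule: rtranclp_induct) (auto dest: prune_step_len)

section \<open>Pruning does not raise the alternation level\<close>

lemma AH_Var: "AH eta n (Var z)"
  by (induction n) (auto intro: AH.atom AH.up)

lemma prune_step_fpbindE:
  assumes "prune_step z (fpbind k x c) g"
  obtains "g = Var z" | c' where "prune_step z c c'" "g = fpbind k x c'"
  using assms by (cases k) (auto elim: prune_step.cases)

lemma BV_fpbind [simp]: "BV (fpbind k x c) = insert x (BV c)"
  by (cases k) auto

lemma AH_prune_step: "AH eta n f \<Longrightarrow> prune_step z f g \<Longrightarrow> z \<notin> BV f \<Longrightarrow> AH eta n g"
proof (induction arbitrary: g z rule: AH.induct)
  case (atom f eta)
  from atom.prems(1) show ?case by cases (use atom in \<open>auto intro: AH_Var\<close>)
next
  case (conj eta n a b)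
  from conj.prems(1) show ?case by cases (use conj in \<open>auto intro: AH.conj AH_Var\<close>)
next
  case (disj eta n a b)
  from disj.prems(1) show ?case by cases (use disj in \<open>auto intro: AH.disj AH_Var\<close>)
next
  case (dia eta n a)
  from dia.prems(1) show ?case by cases (use dia in \<open>auto intro: AH.dia AH_Var\<close>)
next
  case (box eta n a)
  from box.prems(1) show ?case by cases (use box in \<open>auto intro: AH.box AH_Var\<close>)
next
  case (fix_dual eta n c x)
  from fix_dual.prems(1) show ?case
    by (rule prune_step_fpbindE) (use fix_dual in \<open>auto intro: AH.fix_dual AH_Var\<close>)
next
  case (up eta' n f eta)
  then show ?case by (auto intro: AH.up)
next
  case (sub eta n c e x)
  show ?case
  proof (cases "x \<in> FV c")
    case False
    then show ?thesis using sub by (simp add: subst_not_free)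
  next
    case True
    have z: "z \<notin> BV c" "z \<notin> BV e"
      using sub.prems(2) BV_subst_supset[of c x e] BV_subst_supset_arg[OF True, of e] by auto
    obtain u where u: "u \<notin> FV c \<union> BV c \<union> FV e \<union> {x, z}"
      using ex_new_if_finite[OF infinite_UNIV_nat, of "FV c \<union> BV c \<union> FV e \<union> {x, z}"] by auto
    then have "subst_split z u c x e g"
      using prune_step_subst_split[OF sub.prems(1) sub.hyps(3) z(1)] by auto
    then obtain c' t where split: "prune_step u c c'" "t = Var z \<or> prune_step z e t"
        "freefor t u (subst c' x e)" "g = subst (subst c' x e) u t"
      unfolding subst_split_def by blast
    have "AH eta n (subst c' x e)"
      using sub.IH(1)[OF split(1)] u sub.hyps(2,3) freefor_prune_step[OF split(1)]
      by (auto intro: AH.sub)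
    moreover have "AH eta n t" using split(2) sub.IH(2) z(2) by (auto intro: AH_Var)
    ultimately show ?thesis unfolding split(4) using split(3) by (rule AH.sub)
  qed
qed

lemma AH_prunes: "prunes z f g \<Longrightarrow> AH eta n f \<Longrightarrow> z \<notin> BV f \<Longrightarrow> AH eta n g"
  by (induction rule: rtranclp_induct) (auto intro: AH_prune_step dest: prunes_BV)

lemma AH_mono:
  assumes "AH eta k f" "k \<le> n"
  shows "AH eta n f"
  using assms(2,1) by (induction n rule: dec_induct) (auto intro: AH.up)

lemma AH_len: "AH eta (len f) f"
proof (induction f arbitrary: eta)
  case (And a b)
  have "AH eta (len (And a b)) a" "AH eta (len (And a b)) b"
    by (auto intro: AH_mono[OF And(1)] AH_mono[OF And(2)])
  then show ?case by (rule AH.conj)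
next
  case (Or a b)
  have "AH eta (len (Or a b)) a" "AH eta (len (Or a b)) b"
    by (auto intro: AH_mono[OF Or(1)] AH_mono[OF Or(2)])
  then show ?case by (rule AH.disj)
next
  case (Dia a)
  have "AH eta (len (Dia a)) a" by (auto intro: AH_mono[OF Dia])
  then show ?case by (rule AH.dia)
next
  case (Box a)
  have "AH eta (len (Box a)) a" by (auto intro: AH_mono[OF Box])
  then show ?case by (rule AH.box)
next
  case (Mu x a)
  have "AH NuOp (len a) (Mu x a)" using AH.fix_dual[OF Mu[of NuOp], of x] by simp
  then show ?case by (auto intro: AH.up)
next
  case (Nu x a)
  have "AH MuOp (len a) (Nu x a)" using AH.fix_dual[OF Nu[of MuOp], of x] by simp
  then show ?case by (auto intro: AH.up)
qed (auto intro: AH_mono[OF AH.atom])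

lemma AH_ad: "AH eta (ad eta f) f"
  unfolding ad_def using AH_len by (rule LeastI)

lemma ad_le: "AH eta n f \<Longrightarrow> ad eta f \<le> n"
  unfolding ad_def by (rule Least_le)

lemma ad_prunes: "prunes z f g \<Longrightarrow> z \<notin> BV f \<Longrightarrow> ad eta g \<le> ad eta f"
  using AH_prunes AH_ad ad_le by blast

section \<open>Abstracting the occurrences of a formula\<close>

fun abstract_over :: "'p fm \<Rightarrow> nat \<Rightarrow> 'p fm \<Rightarrow> 'p fm" where
  "abstract_over e z (And a b) = (if And a b = e then Var z else And (abstract_over e z a) (abstract_over e z b))"
| "abstract_over e z (Or a b) = (if Or a b = e then Var z else Or (abstract_over e z a) (abstract_over e z b))"
| "abstract_over e z (Dia a) = (if Dia a = e then Var z else Dia (abstract_over e z a))"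
| "abstract_over e z (Box a) = (if Box a = e then Var z else Box (abstract_over e z a))"
| "abstract_over e z (Mu x a) = (if Mu x a = e then Var z else Mu x (abstract_over e z a))"
| "abstract_over e z (Nu x a) = (if Nu x a = e then Var z else Nu x (abstract_over e z a))"
| "abstract_over e z f = (if f = e then Var z else f)"

lemma abstract_over_self [simp]: "abstract_over e z e = Var z"
  by (cases e) auto

lemma prunes_abstract_over: "prunes z f (abstract_over e z f)"
  by (induction f) (auto intro: prunes_AndI prunes_OrI prunes_DiaI prunes_BoxI prunes_MuI prunes_NuI prune_step.here)

lemma prunes_abstract_over_subst: "prunes z c (abstract_over e z (subst c x e))"
  by (induction c) (auto intro: prunes_AndI prunes_OrI prunes_DiaI prunes_BoxI prunes_MuI prunes_NuI
      prune_step.here prunes_abstract_over)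

lemma subst_abstract_over: "z \<notin> FV f \<Longrightarrow> z \<notin> BV f \<Longrightarrow> subst (abstract_over e z f) z e = f"
  by (induction f) auto

lemma abstract_over_unchanged_or_FV: "z \<notin> BV f \<Longrightarrow> abstract_over e z f = f \<or> z \<in> FV (abstract_over e z f)"
  by (induction f) auto

lemma abstract_over_neq:
  assumes "z \<notin> BV f" "z \<notin> FV e" "1 < len e"
  shows "abstract_over e z f \<noteq> e"
  using abstract_over_unchanged_or_FV[OF assms(1), of e] assms by (cases "f = e") auto

fun subformulas :: "'p fm \<Rightarrow> 'p fm set" where
  "subformulas (And a b) = insert (And a b) (subformulas a \<union> subformulas b)"
| "subformulas (Or a b) = insert (Or a b) (subformulas a \<union> subformulas b)"
| "subformulas (Dia a) = insert (Dia a) (subformulas a)"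
| "subformulas (Box a) = insert (Box a) (subformulas a)"
| "subformulas (Mu x a) = insert (Mu x a) (subformulas a)"
| "subformulas (Nu x a) = insert (Nu x a) (subformulas a)"
| "subformulas f = {f}"

lemma subformulas_self: "f \<in> subformulas f"
  by (cases f) auto

lemma subformulas_subst: "x \<in> FV c \<Longrightarrow> e \<in> subformulas (subst c x e)"
  by (induction c) (auto simp: subformulas_self)

lemma not_subformula_abstract_over:
  "z \<notin> BV f \<Longrightarrow> z \<notin> FV e \<Longrightarrow> 1 < len e \<Longrightarrow> e \<notin> subformulas (abstract_over e z f)"
proof (induction f)
  case (And a b)
  then show ?case using abstract_over_neq[of z "And a b" e] by (auto split: if_split_asm)
next
  case (Or a b)
  then show ?case using abstract_over_neq[of z "Or a b" e] by (auto split: if_split_asm)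
next
  case (Dia a)
  then show ?case using abstract_over_neq[of z "Dia a" e] by (auto split: if_split_asm)
next
  case (Box a)
  then show ?case using abstract_over_neq[of z "Box a" e] by (auto split: if_split_asm)
next
  case (Mu x a)
  then show ?case using abstract_over_neq[of z "Mu x a" e] by (auto split: if_split_asm)
next
  case (Nu x a)
  then show ?case using abstract_over_neq[of z "Nu x a" e] by (auto split: if_split_asm)
qed auto

lemma not_free_sub_abstract_over:
  assumes "z \<notin> BV f" "z \<notin> FV e" "1 < len e"
  shows "\<not> free_sub e (abstract_over e z f)"
  using not_subformula_abstract_over[OF assms] subformulas_subst unfolding free_sub_def by metis

theorem mainTheorem10:
  fixes \<xi> \<chi> :: "'p fm" and x :: nat
  assumes "freefor \<xi> x \<chi>" and "x \<in> FV \<chi>" and "len \<xi> > 1" and "tidy (subst \<chi> x \<xi>)"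
  shows "\<exists>\<chi>' x'. tidy \<chi>' \<and> freefor \<xi> x' \<chi>' \<and> subst \<chi>' x' \<xi> = subst \<chi> x \<xi>
           \<and> len \<chi>' \<le> len \<chi> \<and> (\<forall>eta. ad eta \<chi>' \<le> ad eta \<chi>) \<and> \<not> free_sub \<xi> \<chi>'"
proof -
  let ?\<phi> = "subst \<chi> x \<xi>"
  obtain z where z: "z \<notin> FV ?\<phi> \<union> BV ?\<phi> \<union> FV \<xi>"
    using ex_new_if_finite[OF infinite_UNIV_nat, of "FV ?\<phi> \<union> BV ?\<phi> \<union> FV \<xi>"] by auto
  let ?\<chi>' = "abstract_over \<xi> z ?\<phi>"
  have from_\<phi>: "prunes z ?\<phi> ?\<chi>'" and from_\<chi>: "prunes z \<chi> ?\<chi>'"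
    by (rule prunes_abstract_over, rule prunes_abstract_over_subst)
  have tidy_\<phi>: "FV ?\<phi> \<inter> BV ?\<phi> = {}" using assms(4) unfolding tidy_def .
  have "tidy ?\<chi>'"
    using z tidy_\<phi> prunes_FV[OF from_\<phi>] prunes_BV[OF from_\<phi>] unfolding tidy_def by blast
  moreover have "freefor \<xi> z ?\<chi>'"
    using FV_subst_supset[OF assms(2,1)] tidy_\<phi> prunes_BV[OF from_\<phi>]
    by (blast intro: freefor_if_disjoint)
  moreover have "subst ?\<chi>' z \<xi> = ?\<phi>" using z by (simp add: subst_abstract_over)
  moreover have "len ?\<chi>' \<le> len \<chi>" using from_\<chi> by (rule prunes_len)
  moreover have "ad eta ?\<chi>' \<le> ad eta \<chi>" for eta
    using ad_prunes[OF from_\<chi>] z BV_subst_supset[of \<chi> x \<xi>] by blast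
  moreover have "\<not> free_sub \<xi> ?\<chi>'" using z assms(3) by (simp add: not_free_sub_abstract_over)
  ultimately show ?thesis by blast
qed

end
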